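(* Let $W$ be an affine extended Coxeter group (notation as in the context) and let $D$ be a Weyl chamber. Then the submonoid $X_D:=\{x\in X:\rho(x)\in\overline D\}$ of $X$ is finitely generated as a monoid (here $\rho(x)$ denotes the translation vector by which $x$ acts).
   Context: An affine extended Coxeter group consists of a group $W$, a homomorphism $\rho:W\to\mathrm{Aut}_{\mathrm{aff}}(V)$ to the affine automorphism group of a finite-dimensional real vector space $V$, a locally finite set $\mathfrak H$ of affine hyperplanes in $V$, a connected component $C_0$ of $V\setminus\bigcup_{H\in\mathfrak H}H$, and elements $\widetilde s_H\in W$ ($H\in\mathfrak H$) such that: (ACI) $\rho(w)(H)\in\mathfrak H$ for all $w,H$; (ACII) $\rho(\widetilde s_H)$ is a reflection fixing $H$; (ACIII) the group $W_0:=\rho_0(W)$ of linear parts is finite; (ACIV) $0$ is a special point (every $H\in\mathfrak H$ is parallel to some $H'\in\mathfrak H$ with $0\in H'$); (ACV) the translations in $\rho(W)$ span $V/L$ as a real vector space, where $L=\bigcap_{H\in\mathfrak H,0\in H}H$; (ACVI) $w\widetilde s_Hw^{-1}=\widetilde s_{\rho(w)(H)}$; (ACVII) if $H_1,H_2$ are walls of $C_0$ (i.e. $H\cap\overline{C_0}$ has nonempty interior in $H$) and $\rho(\widetilde s_{H_1}\widetilde s_{H_2})$ has finite order $m$, then $(\widetilde s_{H_1}\widetilde s_{H_2})^m=1$; (ACVIII) $W_0$ is generated by the images of the $\widetilde s_H$; (ACIX) $0\in\overline{C_0}$; (ACX) $X:=\rho^{-1}(V)$ (elements acting by translations) is finitely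 generated and commutative. With $H_{\alpha,k}=\{v:\alpha(v)+k=0\}$, set $\Phi=\{\alpha\in V^\vee:\forall k\in\mathbb R,\ H_{\alpha,k}\in\mathfrak H\iff k\in\mathbb Z\}$; Weyl chambers are the connected components of $V\setminus\bigcup_{\alpha\in\Phi}\ker\alpha$. *)

theory Defs
  imports "HOL-Analysis.Analysis" "HOL-Algebra.Generated_Groups"
begin

definition aff_aut :: "('v::euclidean_space \<Rightarrow> 'v) \<Rightarrow> bool" where
  "aff_aut f \<longleftrightarrow> (\<exists>A b. linear A \<and> bij A \<and> f = (\<lambda>v. A v + b))"

definition lin_part :: "('v::euclidean_space \<Rightarrow> 'v) \<Rightarrow> ('v \<Rightarrow> 'v)" where
  "lin_part f = (\<lambda>v. f v - f 0)"

definition hyp :: "('v::euclidean_space \<Rightarrow> real) \<Rightarrow> real \<Rightarrow> 'v set" where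
  "hyp \<alpha> k = {v. \<alpha> v + k = 0}"

definition affine_hyperplane :: "'v::euclidean_space set \<Rightarrow> bool" where
  "affine_hyperplane H \<longleftrightarrow> (\<exists>\<alpha> k. linear \<alpha> \<and> \<alpha> \<noteq> (\<lambda>_. 0) \<and> H = hyp \<alpha> k)"

definition locally_finite_hyps :: "'v::euclidean_space set set \<Rightarrow> bool" where
  "locally_finite_hyps \<H> \<longleftrightarrow> (\<forall>K. compact K \<longrightarrow> finite {H \<in> \<H>. H \<inter> K \<noteq> {}})"

text \<open>A (not necessarily orthogonal) affine reflection whose fixed point set is exactly H.\<close>
definition reflection_fixing :: "('v::euclidean_space \<Rightarrow> 'v) \<Rightarrow> 'v set \<Rightarrow> bool" where
  "reflection_fixing r H \<longleftrightarrow> aff_aut r \<and> r \<circ> r = id \<and> {v. r v = v} = H"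

definition translation :: "'v::euclidean_space \<Rightarrow> ('v \<Rightarrow> 'v)" where
  "translation t = (\<lambda>v. v + t)"

definition parallel_hyps :: "'v::euclidean_space set \<Rightarrow> 'v set \<Rightarrow> bool" where
  "parallel_hyps H H' \<longleftrightarrow> (\<exists>t. H' = translation t ` H)"

definition is_wall :: "'v::euclidean_space set \<Rightarrow> 'v set \<Rightarrow> bool" where
  "is_wall C H \<longleftrightarrow> (\<exists>U. openin (top_of_set H) U \<and> U \<noteq> {} \<and> U \<subseteq> H \<inter> closure C)"

inductive_set fun_generated :: "('v \<Rightarrow> 'v) set \<Rightarrow> ('v \<Rightarrow> 'v) set" for S where
  gen_id: "id \<in> fun_generated S"
| gen_comp: "f \<in> S \<Longrightarrow> g \<in> fun_generated S \<Longrightarrow> f \<circ> g \<in> fun_generated S"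
| gen_inv: "f \<in> S \<Longrightarrow> g \<in> fun_generated S \<Longrightarrow> inv_into UNIV f \<circ> g \<in> fun_generated S"

definition transl_part :: "('a, 'm) monoid_scheme \<Rightarrow> ('a \<Rightarrow> 'v::euclidean_space \<Rightarrow> 'v) \<Rightarrow> 'a set" where
  "transl_part W \<rho> = {x \<in> carrier W. \<exists>t. \<rho> x = translation t}"

definition affine_ext_coxeter ::
  "('a, 'm) monoid_scheme \<Rightarrow> ('a \<Rightarrow> 'v::euclidean_space \<Rightarrow> 'v) \<Rightarrow> 'v set set \<Rightarrow> 'v set
    \<Rightarrow> ('v set \<Rightarrow> 'a) \<Rightarrow> bool" where
  "affine_ext_coxeter W \<rho> \<H> C0 s \<longleftrightarrow>
     group W
   \<and> (\<forall>w \<in> carrier W. aff_aut (\<rho> w))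
   \<and> (\<forall>x \<in> carrier W. \<forall>y \<in> carrier W. \<rho> (x \<otimes>\<^bsub>W\<^esub> y) = \<rho> x \<circ> \<rho> y)
   \<and> (\<forall>H \<in> \<H>. affine_hyperplane H)
   \<and> locally_finite_hyps \<H>
   \<and> C0 \<in> components (- \<Union>\<H>)
   \<and> (\<forall>H \<in> \<H>. s H \<in> carrier W)
   \<comment> \<open>ACI\<close>
   \<and> (\<forall>w \<in> carrier W. \<forall>H \<in> \<H>. \<rho> w ` H \<in> \<H>)
   \<comment> \<open>ACII\<close>
   \<and> (\<forall>H \<in> \<H>. reflection_fixing (\<rho> (s H)) H)
   \<comment> \<open>ACIII\<close>
   \<and> finite ((\<lambda>w. lin_part (\<rho> w)) ` carrier W)
   \<comment> \<open>ACIV\<close>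
   \<and> (\<forall>H \<in> \<H>. \<exists>H' \<in> \<H>. 0 \<in> H' \<and> parallel_hyps H H')
   \<comment> \<open>ACV\<close>
   \<and> span ({t. translation t \<in> \<rho> ` carrier W} \<union> \<Inter>{H \<in> \<H>. 0 \<in> H}) = UNIV
   \<comment> \<open>ACVI\<close>
   \<and> (\<forall>w \<in> carrier W. \<forall>H \<in> \<H>. w \<otimes>\<^bsub>W\<^esub> s H \<otimes>\<^bsub>W\<^esub> inv\<^bsub>W\<^esub> w = s (\<rho> w ` H))
   \<comment> \<open>ACVII\<close>
   \<and> (\<forall>H1 \<in> \<H>. \<forall>H2 \<in> \<H>. is_wall C0 H1 \<longrightarrow> is_wall C0 H2 \<longrightarrow>
        (\<forall>m::nat. 0 < m \<and> (\<rho> (s H1 \<otimes>\<^bsub>W\<^esub> s H2)) ^^ m = id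
             \<and> (\<forall>k. 0 < k \<and> k < m \<longrightarrow> (\<rho> (s H1 \<otimes>\<^bsub>W\<^esub> s H2)) ^^ k \<noteq> id)
           \<longrightarrow> (s H1 \<otimes>\<^bsub>W\<^esub> s H2) [^]\<^bsub>W\<^esub> m = \<one>\<^bsub>W\<^esub>))
   \<comment> \<open>ACVIII\<close>
   \<and> (\<lambda>w. lin_part (\<rho> w)) ` carrier W = fun_generated ((\<lambda>H. lin_part (\<rho> (s H))) ` \<H>)
   \<comment> \<open>ACIX\<close>
   \<and> 0 \<in> closure C0
   \<comment> \<open>ACX\<close>
   \<and> (\<exists>F. finite F \<and> F \<subseteq> transl_part W \<rho> \<and> generate W F = transl_part W \<rho>)
   \<and> (\<forall>x \<in> transl_part W \<rho>. \<forall>y \<in> transl_part W \<rho>. x \<otimes>\<^bsub>W\<^esub> y = y \<otimes>\<^bsub>W\<^esub> x)"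

definition roots :: "'v::euclidean_space set set \<Rightarrow> ('v \<Rightarrow> real) set" where
  "roots \<H> = {\<alpha>. linear \<alpha> \<and> (\<forall>k::real. hyp \<alpha> k \<in> \<H> \<longleftrightarrow> k \<in> \<int>)}"

definition weyl_chambers :: "'v::euclidean_space set set \<Rightarrow> 'v set set" where
  "weyl_chambers \<H> = components (- (\<Union>\<alpha> \<in> roots \<H>. {v. \<alpha> v = 0}))"

inductive_set monoid_generated :: "('a, 'm) monoid_scheme \<Rightarrow> 'a set \<Rightarrow> 'a set" for W F where
  mg_one: "\<one>\<^bsub>W\<^esub> \<in> monoid_generated W F"
| mg_mult: "a \<in> F \<Longrightarrow> x \<in> monoid_generated W F \<Longrightarrow> a \<otimes>\<^bsub>W\<^esub> x \<in> monoid_generated W F"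

end

theory Submission
  imports Defs "HOL-Algebra.FiniteProduct" "HOL-Library.Function_Algebras"
begin

text \<open>
  Local finiteness leaves only finitely many root kernels through 0, so the closed chamber
  \<open>closure D\<close> is cut out by finitely many root half-spaces \<open>0 \<le> \<beta> v\<close>.
  Roots take integer values on translation vectors, hence become additive maps \<open>X \<rightarrow> \<int>\<close>,
  and \<open>X\<^sub>D\<close> is the submonoid on which finitely many of them are non-negative.
  Since \<open>X\<close> is a commutative monoid generated by finitely many elements \<open>E\<close>, every element
  is a product of powers of elements of \<open>E\<close>, and \<open>X\<^sub>D\<close> is the image of the lattice points of
  a rational cone in \<open>\<nat>\<^sup>E\<close>. That cone is generated by its minimal nonzero points
  (Gordan's lemma), and these form an antichain for a product order on \<open>\<nat>\<^sup>k\<close>, so they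
  are finitely many by Dickson's lemma.
\<close>

section \<open>Dickson's lemma\<close>

lemma nat_seq_incseq_subseq:
  fixes f :: "nat \<Rightarrow> nat"
  obtains r where "strict_mono r" "incseq (\<lambda>n. f (r n))"
proof -
  obtain r where r: "strict_mono r" "monoseq (\<lambda>n. f (r n))"
    using seq_monosub by blast
  show thesis
  proof (cases "incseq (\<lambda>n. f (r n))")
    case True
    with r(1) show thesis by (rule that)
  next
    case False
    with r(2) have dec: "decseq (\<lambda>n. f (r n))"
      by (simp add: monoseq_iff)
    obtain N where N: "\<And>n. f (r N) \<le> f (r n)"
      using ex_has_least_nat[of "\<lambda>_. True" 0 "\<lambda>n. f (r n)"] by auto
    have "f (r (n + N)) = f (r N)" for n
      using decseqD[OF dec, of N "n + N"] N[of "n + N"] by simp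
    then have "incseq (\<lambda>n. f (r (n + N)))"
      by (simp add: incseq_def)
    moreover have "strict_mono (\<lambda>n. r (n + N))"
      using r(1) by (simp add: strict_mono_def)
    ultimately show thesis by (rule that[rotated])
  qed
qed

lemma ex_subseq_incseq_all:
  fixes K :: "('b \<Rightarrow> nat) set" and x :: "nat \<Rightarrow> 'b"
  assumes "finite K"
  shows "\<exists>r. strict_mono r \<and> (\<forall>k\<in>K. incseq (\<lambda>n. k (x (r n))))"
  using assms
proof (induction K rule: finite_induct)
  case empty
  show ?case using strict_mono_id by blast
next
  case (insert k K)
  then obtain r where r: "strict_mono r" "\<forall>k\<in>K. incseq (\<lambda>n. k (x (r n)))"
    by blast
  obtain q where q: "strict_mono q" "incseq (\<lambda>n. k (x (r (q n))))"
    using nat_seq_incseq_subseq[of "\<lambda>n. k (x (r n))"] by blast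
  have "incseq (\<lambda>n. k' (x (r (q n))))" if "k' \<in> K" for k'
    using r(2) that strict_mono_mono[OF q(1)] by (auto simp: incseq_def mono_def)
  moreover have "strict_mono (\<lambda>n. r (q n))"
    using r(1) q(1) by (simp add: strict_mono_def)
  ultimately show ?case
    using q(2) by blast
qed

lemma finite_if_no_comparable_pair:
  fixes K :: "('b \<Rightarrow> nat) set"
  assumes "finite K"
    and "\<And>x y. x \<in> M \<Longrightarrow> y \<in> M \<Longrightarrow> \<forall>k\<in>K. k x \<le> k y \<Longrightarrow> x = y"
  shows "finite M"
proof (rule ccontr)
  assume "infinite M"
  then obtain x :: "nat \<Rightarrow> 'b" where x: "inj x" "range x \<subseteq> M"
    using infinite_iff_countable_subset[THEN iffD1] by metis
  obtain r where r: "strict_mono r" "\<forall>k\<in>K. incseq (\<lambda>n. k (x (r n)))"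
    using ex_subseq_incseq_all[OF assms(1)] by blast
  have "\<forall>k\<in>K. k (x (r 0)) \<le> k (x (r 1))"
    using r(2) by (force intro: incseqD)
  with x(2) have "x (r 0) = x (r 1)"
    by (intro assms(2)) auto
  with x(1) r(1) show False
    by (simp add: inj_eq strict_mono_eq)
qed

section \<open>Gordan's lemma\<close>

locale nat_cone =
  fixes E :: "'a set" and Cs :: "('a \<Rightarrow> int) set"
  assumes finite_E: "finite E" and finite_Cs: "finite Cs"
begin

definition weight :: "('a \<Rightarrow> int) \<Rightarrow> ('a \<Rightarrow> nat) \<Rightarrow> int" where
  "weight c u = (\<Sum>e\<in>E. c e * int (u e))"

definition points :: "('a \<Rightarrow> nat) set" where
  "points = {u. (\<forall>e. e \<notin> E \<longrightarrow> u e = 0) \<and> (\<forall>c\<in>Cs. 0 \<le> weight c u)}"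

text \<open>Comparing the constraint values as well keeps \<open>u - w\<close> inside the cone.\<close>

definition below :: "('a \<Rightarrow> nat) \<Rightarrow> ('a \<Rightarrow> nat) \<Rightarrow> bool" where
  "below w u \<longleftrightarrow> w \<le> u \<and> (\<forall>c\<in>Cs. weight c w \<le> weight c u)"

definition atoms :: "('a \<Rightarrow> nat) set" where
  "atoms = {u \<in> points. u \<noteq> 0 \<and> (\<forall>w\<in>points. w \<noteq> 0 \<longrightarrow> below w u \<longrightarrow> w = u)}"

definition total :: "('a \<Rightarrow> nat) \<Rightarrow> nat" where
  "total u = (\<Sum>e\<in>E. u e)"

lemma weight_diff: "w \<le> u \<Longrightarrow> weight c (u - w) = weight c u - weight c w"
  by (simp add: weight_def le_fun_def of_nat_diff sum_subtractf[symmetric] algebra_simps)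

lemma points_diff:
  assumes "u \<in> points" and "below w u"
  shows "u - w \<in> points"
  using assms by (auto simp: points_def below_def weight_diff)

lemma total_eq_0_iff: "u \<in> points \<Longrightarrow> total u = 0 \<longleftrightarrow> u = 0"
  using finite_E by (auto simp: points_def total_def fun_eq_iff)

lemma total_diff: "w \<le> u \<Longrightarrow> total (u - w) = total u - total w"
  using finite_E by (simp add: total_def le_fun_def sum_subtractf_nat)

lemma finite_atoms: "finite atoms"
proof (rule finite_if_no_comparable_pair)
  let ?K = "(\<lambda>e u. u e) ` E \<union> (\<lambda>c u. nat (weight c u)) ` Cs"
  show "finite ?K"
    using finite_E finite_Cs by simp
  fix w u assume atoms: "w \<in> atoms" "u \<in> atoms" and "\<forall>k\<in>?K. k w \<le> k u"
  then have "\<forall>e\<in>E. w e \<le> u e" and "\<forall>c\<in>Cs. nat (weight c w) \<le> nat (weight c u)"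
    by auto
  with atoms have "below w u"
    by (fastforce simp: below_def atoms_def points_def le_fun_def)
  with atoms show "w = u"
    by (auto simp: atoms_def)
qed

lemma ex_atom_below:
  assumes "u \<in> points" and "u \<noteq> 0"
  obtains w where "w \<in> atoms" and "below w u"
proof -
  let ?C = "{w \<in> points. w \<noteq> 0 \<and> below w u}"
  have "u \<in> ?C"
    using assms by (simp add: below_def)
  then obtain w where w: "w \<in> ?C" and min: "\<And>w'. w' \<in> ?C \<Longrightarrow> total w \<le> total w'"
    using ex_has_least_nat[of "\<lambda>w. w \<in> ?C" u total] by blast
  have "w' = w" if "w' \<in> points" "w' \<noteq> 0" "below w' w" for w'
  proof -
    have "below w' u"
      using that(3) w by (auto simp: below_def intro: order_trans)
    with that have "total w \<le> total w'"
      by (intro min) simp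
    moreover have "w' \<le> w"
      using that(3) by (simp add: below_def)
    ultimately have "total (w - w') = 0"
      by (simp add: total_diff)
    moreover have "w - w' \<in> points"
      using w that(3) by (intro points_diff) auto
    ultimately have "w - w' = 0"
      using total_eq_0_iff by blast
    with \<open>w' \<le> w\<close> show "w' = w"
      by (auto simp: fun_eq_iff le_fun_def intro: antisym)
  qed
  with w show thesis
    by (intro that) (auto simp: atoms_def)
qed

lemma points_sum_list_atoms:
  assumes "u \<in> points"
  shows "\<exists>us. set us \<subseteq> atoms \<and> u = sum_list us"
  using assms
proof (induction u rule: measure_induct_rule[of total])
  case (less u)
  show ?case
  proof (cases "u = 0")
    case True
    then show ?thesis by (intro exI[of _ "[]"]) simp
  next
    case False
    then obtain w where w: "w \<in> atoms" "below w u"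
      using ex_atom_below less.prems by blast
    then have "w \<le> u" and "w \<noteq> 0" and "w \<in> points"
      by (auto simp: below_def atoms_def)
    then have "total w \<noteq> 0"
      by (simp add: total_eq_0_iff)
    moreover have "total w \<le> total u"
      using \<open>w \<le> u\<close> by (simp add: total_def le_fun_def sum_mono)
    ultimately have "total (u - w) < total u"
      using \<open>w \<le> u\<close> by (simp add: total_diff)
    moreover have "u - w \<in> points"
      using less.prems w(2) by (rule points_diff)
    ultimately obtain us where us: "set us \<subseteq> atoms" "u - w = sum_list us"
      using less.IH by blast
    have "u = w + (u - w)"
      using \<open>w \<le> u\<close> by (simp add: le_fun_def fun_eq_iff)
    with w(1) us show ?thesis
      by (intro exI[of _ "w # us"]) simp
  qed
qed

end

section \<open>Submonoids cut out by additive maps to \<open>\<int>\<close>\<close>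

lemma monoid_generated_minimal:
  assumes "F \<subseteq> T" and "\<one>\<^bsub>G\<^esub> \<in> T"
    and "\<And>x y. x \<in> T \<Longrightarrow> y \<in> T \<Longrightarrow> x \<otimes>\<^bsub>G\<^esub> y \<in> T"
  shows "monoid_generated G F \<subseteq> T"
proof
  fix x assume "x \<in> monoid_generated G F"
  then show "x \<in> T"
    by induction (use assms in auto)
qed

lemma monoid_generated_carrier_update:
  "monoid_generated (G\<lparr>carrier := X\<rparr>) F = monoid_generated G F"
proof -
  have "x \<in> monoid_generated G F" if "x \<in> monoid_generated (G\<lparr>carrier := X\<rparr>) F" for x
    using that by induction (auto intro: monoid_generated.intros)
  moreover have "x \<in> monoid_generated (G\<lparr>carrier := X\<rparr>) F" if "x \<in> monoid_generated G F" for x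
    using that by induction (auto intro: monoid_generated.intros[where W = "G\<lparr>carrier := X\<rparr>", simplified])
  ultimately show ?thesis by blast
qed

lemma (in monoid) monoid_generated_subset_carrier:
  "F \<subseteq> carrier G \<Longrightarrow> monoid_generated G F \<subseteq> carrier G"
  by (rule monoid_generated_minimal) auto

lemma (in monoid) monoid_generated_mult_closed:
  assumes "F \<subseteq> carrier G" and "x \<in> monoid_generated G F" and "y \<in> monoid_generated G F"
  shows "x \<otimes> y \<in> monoid_generated G F"
  using assms(2)
proof induction
  case mg_one
  show ?case
    using monoid_generated_subset_carrier[OF assms(1)] assms(3) by auto
next
  case (mg_mult a x)
  with assms have "a \<otimes> x \<otimes> y = a \<otimes> (x \<otimes> y)"
    using monoid_generated_subset_carrier[OF assms(1)] by (auto intro: m_assoc)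
  with mg_mult show ?case
    by (metis monoid_generated.mg_mult)
qed

lemma (in group) generate_subset_monoid_generated:
  assumes "F \<subseteq> carrier G"
  shows "generate G F \<subseteq> monoid_generated G (F \<union> m_inv G ` F)"
proof
  have gens: "F \<union> m_inv G ` F \<subseteq> carrier G"
    using assms by auto
  have single: "a \<in> monoid_generated G (F \<union> m_inv G ` F)" if "a \<in> F \<union> m_inv G ` F" for a
    using monoid_generated.mg_mult[OF that monoid_generated.mg_one[of G]] that gens by auto
  fix x assume "x \<in> generate G F"
  then show "x \<in> monoid_generated G (F \<union> m_inv G ` F)"
    by induction (auto intro: single monoid_generated.mg_one monoid_generated_mult_closed[OF gens])
qed

definition (in comm_monoid) pow_prod :: "'a set \<Rightarrow> ('a \<Rightarrow> nat) \<Rightarrow> 'a" where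
  "pow_prod E u = (\<Otimes>e\<in>E. e [^] u e)"

context comm_monoid
begin

lemma pow_prod_closed: "E \<subseteq> carrier G \<Longrightarrow> pow_prod E u \<in> carrier G"
  unfolding pow_prod_def by (auto intro: finprod_closed)

lemma pow_prod_zero: "pow_prod E (\<lambda>_. 0) = \<one>"
  unfolding pow_prod_def by simp

lemma pow_prod_add:
  assumes "E \<subseteq> carrier G"
  shows "pow_prod E (u + w) = pow_prod E u \<otimes> pow_prod E w"
proof -
  have "pow_prod E (u + w) = (\<Otimes>e\<in>E. e [^] u e \<otimes> e [^] w e)"
    unfolding pow_prod_def using assms by (intro finprod_cong') (auto simp: nat_pow_mult)
  also have "\<dots> = pow_prod E u \<otimes> pow_prod E w"
    unfolding pow_prod_def using assms by (intro finprod_multf) auto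
  finally show ?thesis .
qed

lemma pow_prod_indicator:
  assumes "E \<subseteq> carrier G" and "finite E" and "a \<in> E"
  shows "pow_prod E (\<lambda>e. if e = a then 1 else 0) = a"
proof -
  have "pow_prod E (\<lambda>e. if e = a then 1 else 0) = (\<Otimes>e\<in>E. if a = e then e else \<one>)"
    unfolding pow_prod_def using assms by (intro finprod_cong') auto
  also have "\<dots> = a"
    using assms by (intro finprod_singleton) auto
  finally show ?thesis .
qed

lemma monoid_generated_pow_prod:
  assumes "finite E" and "E \<subseteq> carrier G" and "x \<in> monoid_generated G E"
  shows "\<exists>u. (\<forall>e. e \<notin> E \<longrightarrow> u e = 0) \<and> x = pow_prod E u"
  using assms(3)
proof induction
  case mg_one
  show ?case
    by (intro exI[of _ "\<lambda>_. 0"]) (simp add: pow_prod_zero)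
next
  case (mg_mult a x)
  then obtain u where u: "\<forall>e. e \<notin> E \<longrightarrow> u e = 0" "x = pow_prod E u"
    by blast
  let ?u' = "(\<lambda>e. if e = a then 1 else 0) + u"
  have "pow_prod E ?u' = a \<otimes> x"
    using assms mg_mult(1) u(2) by (simp add: pow_prod_add pow_prod_indicator)
  moreover have "\<forall>e. e \<notin> E \<longrightarrow> ?u' e = 0"
    using u(1) mg_mult(1) by auto
  ultimately show ?case by metis
qed

lemma pow_prod_sum_list:
  assumes "E \<subseteq> carrier G" and "set us \<subseteq> B"
  shows "pow_prod E (sum_list us) \<in> monoid_generated G (pow_prod E ` B)"
  using assms(2)
proof (induction us)
  case Nil
  show ?case
    by (simp add: pow_prod_zero monoid_generated.mg_one)
next
  case (Cons u us)
  have "pow_prod E (sum_list (u # us)) = pow_prod E u \<otimes> pow_prod E (sum_list us)"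
    using assms(1) by (simp only: sum_list.Cons pow_prod_add)
  moreover have "pow_prod E u \<otimes> pow_prod E (sum_list us) \<in> monoid_generated G (pow_prod E ` B)"
    using Cons by (intro monoid_generated.mg_mult) auto
  ultimately show ?case by (simp only:)
qed

lemma additive_one:
  assumes "\<And>x y. x \<in> carrier G \<Longrightarrow> y \<in> carrier G \<Longrightarrow> h (x \<otimes> y) = h x + (h y :: int)"
  shows "h \<one> = 0"
  using assms[of \<one> \<one>] by simp

lemma additive_pow_prod:
  assumes "\<And>x y. x \<in> carrier G \<Longrightarrow> y \<in> carrier G \<Longrightarrow> h (x \<otimes> y) = h x + (h y :: int)"
    and "finite E" and "E \<subseteq> carrier G"
  shows "h (pow_prod E u) = (\<Sum>e\<in>E. h e * int (u e))"
  using assms(2,3)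
proof (induction E rule: finite_induct)
  case empty
  then show ?case
    using additive_one[OF assms(1)] by (simp add: pow_prod_def)
next
  case (insert a E)
  have h_pow: "h (a [^] n) = int n * h a" for n :: nat
    using insert.prems assms(1) by (induction n) (simp_all add: additive_one[OF assms(1)] algebra_simps)
  have "pow_prod (insert a E) u = a [^] u a \<otimes> pow_prod E u"
    using insert unfolding pow_prod_def by (subst finprod_insert) auto
  then show ?case
    using insert assms(1) h_pow by (simp add: pow_prod_closed)
qed

theorem finitely_generated_nonneg_submonoid:
  fixes Hs :: "('a \<Rightarrow> int) set"
  assumes "finite E" and "E \<subseteq> carrier G" and "carrier G \<subseteq> monoid_generated G E"
    and "finite Hs"
    and additive: "\<And>h x y. h \<in> Hs \<Longrightarrow> x \<in> carrier G \<Longrightarrow> y \<in> carrier G \<Longrightarrow> h (x \<otimes> y) = h x + h y"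
  defines "S \<equiv> {x \<in> carrier G. \<forall>h\<in>Hs. 0 \<le> h x}"
  shows "\<exists>F. finite F \<and> F \<subseteq> S \<and> monoid_generated G F = S"
proof -
  interpret cone: nat_cone E Hs
    using assms(1,4) by unfold_locales
  have weight: "h (pow_prod E u) = cone.weight h u" if "h \<in> Hs" for h u
    unfolding cone.weight_def using assms(1,2) by (intro additive_pow_prod) (simp_all add: additive that)
  let ?F = "pow_prod E ` cone.atoms"
  have "?F \<subseteq> S"
    using assms(2) by (auto simp: S_def weight pow_prod_closed cone.atoms_def cone.points_def)
  moreover have "monoid_generated G ?F \<subseteq> S"
  proof (rule monoid_generated_minimal)
    have "0 \<le> h \<one>" if "h \<in> Hs" for h
      using additive_one[of h, OF additive[OF that]] by simp
    then show "\<one> \<in> S"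
      unfolding S_def by blast
    show "x \<otimes> y \<in> S" if "x \<in> S" "y \<in> S" for x y
      using that by (simp add: S_def additive)
  qed fact
  moreover have "S \<subseteq> monoid_generated G ?F"
  proof
    fix x assume "x \<in> S"
    then obtain u where u: "\<forall>e. e \<notin> E \<longrightarrow> u e = 0" "x = pow_prod E u"
      using monoid_generated_pow_prod[OF assms(1,2)] assms(3) by (auto simp: S_def)
    with \<open>x \<in> S\<close> have "u \<in> cone.points"
      by (auto simp: S_def cone.points_def weight)
    then obtain us where "set us \<subseteq> cone.atoms" "u = sum_list us"
      using cone.points_sum_list_atoms by blast
    with u(2) show "x \<in> monoid_generated G ?F"
      using pow_prod_sum_list[OF assms(2)] by blast
  qed
  ultimately show ?thesis
    using cone.finite_atoms by blast
qed

end

section \<open>Closed Weyl chambers\<close>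

lemma linear_const_mult: "linear (f :: 'v::real_vector \<Rightarrow> real) \<Longrightarrow> linear (\<lambda>v. c * f v)"
  using linear_compose_scale_right[of f c] by simp

lemma hyp_translation:
  assumes "linear \<alpha>"
  shows "translation t ` hyp \<alpha> k = hyp \<alpha> (k - \<alpha> t)"
proof
  show "translation t ` hyp \<alpha> k \<subseteq> hyp \<alpha> (k - \<alpha> t)"
    using assms by (auto simp: hyp_def translation_def linear_add)
  show "hyp \<alpha> (k - \<alpha> t) \<subseteq> translation t ` hyp \<alpha> k"
  proof
    fix w assume "w \<in> hyp \<alpha> (k - \<alpha> t)"
    then have "w - t \<in> hyp \<alpha> k"
      using assms by (simp add: hyp_def linear_diff)
    then show "w \<in> translation t ` hyp \<alpha> k"
      by (rule rev_image_eqI) (simp add: translation_def)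
  qed
qed

lemma ex_finite_roots_same_kernels:
  assumes "locally_finite_hyps \<H>"
  obtains R where "finite R" and "R \<subseteq> roots \<H>"
    and "(\<Union>\<alpha>\<in>roots \<H>. {v. \<alpha> v = 0}) = (\<Union>\<beta>\<in>R. {v. \<beta> v = 0})"
proof -
  have "hyp \<alpha> 0 \<in> \<H>" if "\<alpha> \<in> roots \<H>" for \<alpha>
    using that by (simp add: roots_def)
  moreover have "0 \<in> hyp \<alpha> 0" if "\<alpha> \<in> roots \<H>" for \<alpha>
    using that by (simp add: roots_def hyp_def linear_0)
  ultimately have "(\<lambda>\<alpha>. hyp \<alpha> 0) ` roots \<H> \<subseteq> {H \<in> \<H>. H \<inter> {0} \<noteq> {}}"
    by blast
  moreover have "finite {H \<in> \<H>. H \<inter> {0} \<noteq> {}}"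
    using assms compact_sing unfolding locally_finite_hyps_def by blast
  ultimately have "finite ((\<lambda>\<alpha>. hyp \<alpha> 0) ` roots \<H>)"
    by (rule finite_subset)
  then obtain R where R: "R \<subseteq> roots \<H>" "finite R"
    and "(\<lambda>\<alpha>. hyp \<alpha> 0) ` roots \<H> = (\<lambda>\<beta>. hyp \<beta> 0) ` R"
    using finite_subset_image[OF _ subset_refl] by metis
  then have "(\<Union>\<alpha>\<in>roots \<H>. hyp \<alpha> 0) = (\<Union>\<beta>\<in>R. hyp \<beta> 0)"
    by simp
  with R show thesis
    by (intro that) (simp_all add: hyp_def)
qed

lemma component_kernels_complement_eq:
  fixes R :: "('v::euclidean_space \<Rightarrow> real) set"
  assumes lin: "\<forall>\<beta>\<in>R. linear \<beta>"
    and D: "D \<in> components (- (\<Union>\<beta>\<in>R. {v. \<beta> v = 0}))" and "d \<in> D"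
  shows "D = {v. \<forall>\<beta>\<in>R. 0 < \<beta> d * \<beta> v}"
proof
  have nonzero: "\<beta> v \<noteq> 0" if "\<beta> \<in> R" "v \<in> D" for \<beta> v
    using in_components_subset[OF D] that by blast
  show "D \<subseteq> {v. \<forall>\<beta>\<in>R. 0 < \<beta> d * \<beta> v}"
  proof (intro subsetI CollectI ballI)
    fix v \<beta> assume "v \<in> D" "\<beta> \<in> R"
    have conn: "connected (\<beta> ` D)"
      using in_components_connected[OF D] lin \<open>\<beta> \<in> R\<close>
      by (intro connected_continuous_image linear_continuous_on) (auto simp: linear_conv_bounded_linear)
    have no_sign_change: "\<not> (a \<le> 0 \<and> 0 \<le> b)" if "a \<in> \<beta> ` D" "b \<in> \<beta> ` D" for a b
    proof
      assume "a \<le> 0 \<and> 0 \<le> b"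
      then have "0 \<in> \<beta> ` D"
        using connectedD_interval[OF conn that] by simp
      with nonzero \<open>\<beta> \<in> R\<close> show False
        by auto
    qed
    have "\<not> \<beta> d * \<beta> v \<le> 0"
      unfolding mult_le_0_iff using no_sign_change \<open>d \<in> D\<close> \<open>v \<in> D\<close> by blast
    then show "0 < \<beta> d * \<beta> v"
      by simp
  qed
  let ?P = "{v. \<forall>\<beta>\<in>R. 0 < \<beta> d * \<beta> v}"
  have "convex ?P"
  proof -
    have "?P = (\<Inter>\<beta>\<in>R. (\<lambda>v. \<beta> d * \<beta> v) -` {0<..})"
      by auto
    moreover have "convex ((\<lambda>v. \<beta> d * \<beta> v) -` {0<..})" if "\<beta> \<in> R" for \<beta>
      using lin that by (intro convex_linear_vimage linear_const_mult) auto
    ultimately show ?thesis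
      by (simp add: convex_INT)
  qed
  moreover have "?P \<subseteq> - (\<Union>\<beta>\<in>R. {v. \<beta> v = 0})"
    by auto
  moreover have "d \<in> ?P"
    using nonzero \<open>d \<in> D\<close> by (auto simp: zero_less_mult_iff linorder_neq_iff)
  then have "D \<inter> ?P \<noteq> {}"
    using \<open>d \<in> D\<close> by blast
  ultimately show "?P \<subseteq> D"
    by (intro components_maximal[OF D] convex_connected)
qed

lemma closure_strict_halfspaces_Int:
  fixes Fs :: "('v::euclidean_space \<Rightarrow> real) set"
  assumes lin: "\<forall>f\<in>Fs. linear f" and pos: "\<forall>f\<in>Fs. 0 < f d"
  shows "closure {v. \<forall>f\<in>Fs. 0 < f v} = {v. \<forall>f\<in>Fs. 0 \<le> f v}"
proof
  have "closed {v. 0 \<le> f v}" if "f \<in> Fs" for f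
    using lin that by (intro closed_Collect_le continuous_on_const linear_continuous_on)
      (auto simp: linear_conv_bounded_linear)
  moreover have "{v. \<forall>f\<in>Fs. 0 \<le> f v} = (\<Inter>f\<in>Fs. {v. 0 \<le> f v})"
    by auto
  ultimately have "closed {v. \<forall>f\<in>Fs. 0 \<le> f v}"
    by (simp add: closed_INT)
  then show "closure {v. \<forall>f\<in>Fs. 0 < f v} \<subseteq> {v. \<forall>f\<in>Fs. 0 \<le> f v}"
    by (rule closure_minimal[rotated]) (auto simp: less_imp_le)
  show "{v. \<forall>f\<in>Fs. 0 \<le> f v} \<subseteq> closure {v. \<forall>f\<in>Fs. 0 < f v}"
  proof
    fix v assume v: "v \<in> {v. \<forall>f\<in>Fs. 0 \<le> f v}"
    define y where "y n = v + inverse (real (Suc n)) *\<^sub>R (d - v)" for n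
    have "y n \<in> {v. \<forall>f\<in>Fs. 0 < f v}" for n
    proof (intro CollectI ballI)
      fix f assume "f \<in> Fs"
      define t where "t = inverse (real (Suc n))"
      have "0 < t" "t \<le> 1"
        by (simp_all add: t_def field_simps)
      have "f (y n) = (1 - t) * f v + t * f d"
        using lin \<open>f \<in> Fs\<close> by (simp add: y_def t_def linear_add linear_diff linear_scale algebra_simps)
      also have "\<dots> > 0"
        using v pos \<open>f \<in> Fs\<close> \<open>0 < t\<close> \<open>t \<le> 1\<close> by (intro add_nonneg_pos) auto
      finally show "0 < f (y n)" .
    qed
    moreover have "y \<longlonglongrightarrow> v + 0 *\<^sub>R (d - v)"
      unfolding y_def by (intro tendsto_intros LIMSEQ_inverse_real_of_nat)
    ultimately show "v \<in> closure {v. \<forall>f\<in>Fs. 0 < f v}"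
      unfolding closure_sequential by (intro exI[of _ y]) simp
  qed
qed

lemma roots_uminus: "\<beta> \<in> roots \<H> \<Longrightarrow> (\<lambda>v. - \<beta> v) \<in> roots \<H>"
proof -
  have "hyp (\<lambda>v. - \<beta> v) k = hyp \<beta> (- k)" for k
    by (auto simp: hyp_def)
  then show "\<beta> \<in> roots \<H> \<Longrightarrow> (\<lambda>v. - \<beta> v) \<in> roots \<H>"
    by (auto simp: roots_def linear_compose_neg)
qed

lemma weyl_chamber_closure:
  assumes "locally_finite_hyps \<H>" and "D \<in> weyl_chambers \<H>"
  obtains R where "finite R" and "R \<subseteq> roots \<H>" and "closure D = {v. \<forall>\<beta>\<in>R. 0 \<le> \<beta> v}"
proof -
  obtain R0 where R0: "finite R0" "R0 \<subseteq> roots \<H>"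
    and kernels: "(\<Union>\<alpha>\<in>roots \<H>. {v. \<alpha> v = 0}) = (\<Union>\<beta>\<in>R0. {v. \<beta> v = 0})"
    using ex_finite_roots_same_kernels[OF assms(1)] by blast
  have lin: "\<forall>\<beta>\<in>R0. linear \<beta>"
    using R0(2) by (auto simp: roots_def)
  have D: "D \<in> components (- (\<Union>\<beta>\<in>R0. {v. \<beta> v = 0}))"
    using assms(2) kernels by (simp add: weyl_chambers_def)
  then obtain d where "d \<in> D"
    using in_components_nonempty by blast
  with D lin have D_eq: "D = {v. \<forall>\<beta>\<in>R0. 0 < \<beta> d * \<beta> v}"
    by (intro component_kernels_complement_eq)
  define R where "R = (\<lambda>\<beta> v. sgn (\<beta> d) * \<beta> v) ` R0"
  have "(\<lambda>v. sgn (\<beta> d) * \<beta> v) \<in> roots \<H>" if "\<beta> \<in> R0" for \<beta>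
  proof -
    have "\<beta> d \<noteq> 0"
      using \<open>d \<in> D\<close> D_eq that by fastforce
    moreover have "\<beta> \<in> roots \<H>"
      using R0(2) that by blast
    ultimately show ?thesis
      using roots_uminus[of \<beta>] by (cases "\<beta> d < 0") simp_all
  qed
  then have "R \<subseteq> roots \<H>"
    unfolding R_def by blast
  have sgn_pos: "0 < sgn a * b \<longleftrightarrow> 0 < a * b" for a b :: real
    by (simp add: sgn_if zero_less_mult_iff)
  have D_R: "D = {v. \<forall>f\<in>R. 0 < f v}"
    unfolding D_eq R_def by (simp add: sgn_pos)
  moreover have "\<forall>f\<in>R. linear f"
    using lin by (auto simp: R_def intro: linear_const_mult)
  moreover have "\<forall>f\<in>R. 0 < f d"
    using \<open>d \<in> D\<close> D_R by blast
  ultimately have "closure D = {v. \<forall>f\<in>R. 0 \<le> f v}"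
    using closure_strict_halfspaces_Int by blast
  moreover have "finite R"
    using R0(1) by (simp add: R_def)
  ultimately show thesis
    using \<open>R \<subseteq> roots \<H>\<close> that by blast
qed

section \<open>The translation subgroup\<close>

locale affine_ext_coxeter_group =
  fixes W :: "('a, 'm) monoid_scheme" and \<rho> :: "'a \<Rightarrow> 'v::euclidean_space \<Rightarrow> 'v"
    and \<H> :: "'v set set" and C0 :: "'v set" and s :: "'v set \<Rightarrow> 'a"
  assumes affine_ext_coxeter: "affine_ext_coxeter W \<rho> \<H> C0 s"
begin

lemma group: "group W"
  using affine_ext_coxeter by (simp add: affine_ext_coxeter_def)

lemma rho_mult: "x \<in> carrier W \<Longrightarrow> y \<in> carrier W \<Longrightarrow> \<rho> (x \<otimes>\<^bsub>W\<^esub> y) = \<rho> x \<circ> \<rho> y"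
  using affine_ext_coxeter by (simp add: affine_ext_coxeter_def)

lemma locally_finite: "locally_finite_hyps \<H>"
  using affine_ext_coxeter by (simp add: affine_ext_coxeter_def)

lemma rho_image_hyperplane: "w \<in> carrier W \<Longrightarrow> H \<in> \<H> \<Longrightarrow> \<rho> w ` H \<in> \<H>"
  using affine_ext_coxeter by (simp add: affine_ext_coxeter_def)

lemma transl_part_finitely_generated:
  obtains F where "finite F" and "F \<subseteq> transl_part W \<rho>" and "generate W F = transl_part W \<rho>"
proof -
  have "\<exists>F. finite F \<and> F \<subseteq> transl_part W \<rho> \<and> generate W F = transl_part W \<rho>"
    using affine_ext_coxeter by (simp add: affine_ext_coxeter_def)
  with that show thesis
    by blast
qed

lemma transl_part_comm:
  "x \<in> transl_part W \<rho> \<Longrightarrow> y \<in> transl_part W \<rho> \<Longrightarrow> x \<otimes>\<^bsub>W\<^esub> y = y \<otimes>\<^bsub>W\<^esub> x"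
  using affine_ext_coxeter by (simp add: affine_ext_coxeter_def)

lemma rho_transl_part: "x \<in> transl_part W \<rho> \<Longrightarrow> \<rho> x = translation (\<rho> x 0)"
  by (auto simp: transl_part_def translation_def)

lemma rho_mult_transl_part:
  assumes "x \<in> transl_part W \<rho>" and "y \<in> transl_part W \<rho>"
  shows "\<rho> (x \<otimes>\<^bsub>W\<^esub> y) 0 = \<rho> x 0 + \<rho> y 0"
proof -
  have "\<rho> (x \<otimes>\<^bsub>W\<^esub> y) 0 = \<rho> x (\<rho> y 0)"
    using assms by (simp add: rho_mult transl_part_def)
  also have "\<dots> = \<rho> y 0 + \<rho> x 0"
    by (subst rho_transl_part[OF assms(1)]) (simp add: translation_def)
  finally show ?thesis
    by simp
qed

lemma root_transl_part_Ints:
  assumes "\<beta> \<in> roots \<H>" and "x \<in> transl_part W \<rho>"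
  shows "\<beta> (\<rho> x 0) \<in> \<int>"
proof -
  have "linear \<beta>" and "hyp \<beta> 0 \<in> \<H>"
    using assms(1) by (simp_all add: roots_def)
  then have "\<rho> x ` hyp \<beta> 0 \<in> \<H>"
    using assms(2) by (intro rho_image_hyperplane) (simp_all add: transl_part_def)
  moreover have "\<rho> x ` hyp \<beta> 0 = hyp \<beta> (- \<beta> (\<rho> x 0))"
    by (subst rho_transl_part[OF assms(2)]) (simp add: hyp_translation \<open>linear \<beta>\<close>)
  ultimately show ?thesis
    using assms(1) by (simp add: roots_def)
qed

lemma floor_root_mult_transl_part:
  assumes "\<beta> \<in> roots \<H>" and "x \<in> transl_part W \<rho>" and "y \<in> transl_part W \<rho>"
  shows "\<lfloor>\<beta> (\<rho> (x \<otimes>\<^bsub>W\<^esub> y) 0)\<rfloor> = \<lfloor>\<beta> (\<rho> x 0)\<rfloor> + \<lfloor>\<beta> (\<rho> y 0)\<rfloor>"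
proof -
  obtain m where m: "\<beta> (\<rho> y 0) = of_int m"
    using root_transl_part_Ints[OF assms(1,3)] Ints_cases by blast
  have "linear \<beta>"
    using assms(1) by (simp add: roots_def)
  then have "\<beta> (\<rho> (x \<otimes>\<^bsub>W\<^esub> y) 0) = \<beta> (\<rho> x 0) + of_int m"
    using assms(2,3) m by (simp add: rho_mult_transl_part linear_add)
  then show ?thesis
    using m by (simp add: floor_add_int[symmetric])
qed

lemma transl_part_subgroup: "subgroup (transl_part W \<rho>) W"
proof -
  obtain F where "finite F" and F_sub: "F \<subseteq> transl_part W \<rho>"
    and F: "generate W F = transl_part W \<rho>"
    by (rule transl_part_finitely_generated)
  from F_sub have "F \<subseteq> carrier W"
    by (auto simp: transl_part_def)
  then have "subgroup (generate W F) W"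
    by (rule group.generate_is_subgroup[OF group])
  with F show ?thesis
    by simp
qed

lemma transl_part_comm_monoid: "comm_monoid (W\<lparr>carrier := transl_part W \<rho>\<rparr>)"
proof -
  have "group (W\<lparr>carrier := transl_part W \<rho>\<rparr>)"
    using subgroup.subgroup_is_group[OF transl_part_subgroup group] .
  then have "comm_group (W\<lparr>carrier := transl_part W \<rho>\<rparr>)"
    by (rule group.group_comm_groupI) (simp add: transl_part_comm)
  then show ?thesis
    by (rule comm_group.axioms)
qed

lemma transl_part_monoid_generated:
  obtains E where "finite E" and "E \<subseteq> transl_part W \<rho>"
    and "transl_part W \<rho> \<subseteq> monoid_generated W E"
proof -
  interpret W: group W
    by (rule group)
  obtain F where F: "finite F" "F \<subseteq> transl_part W \<rho>" "generate W F = transl_part W \<rho>"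
    by (rule transl_part_finitely_generated)
  have "F \<subseteq> carrier W"
    using F(2) by (auto simp: transl_part_def)
  then have "transl_part W \<rho> \<subseteq> monoid_generated W (F \<union> m_inv W ` F)"
    using W.generate_subset_monoid_generated F(3) by blast
  moreover have "m_inv W ` F \<subseteq> transl_part W \<rho>"
    using F(2) by (auto intro: subgroup.m_inv_closed[OF transl_part_subgroup])
  ultimately show thesis
    using F(1,2) by (intro that[of "F \<union> m_inv W ` F"]) simp_all
qed

lemma finitely_generated_root_halfspaces_submonoid:
  assumes "finite R" and "R \<subseteq> roots \<H>"
  shows "\<exists>F. finite F \<and> F \<subseteq> {x \<in> transl_part W \<rho>. \<forall>\<beta>\<in>R. 0 \<le> \<beta> (\<rho> x 0)}
           \<and> monoid_generated W F = {x \<in> transl_part W \<rho>. \<forall>\<beta>\<in>R. 0 \<le> \<beta> (\<rho> x 0)}"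
proof -
  let ?X = "W\<lparr>carrier := transl_part W \<rho>\<rparr>"
  interpret X: comm_monoid ?X
    by (rule transl_part_comm_monoid)
  obtain E where E: "finite E" "E \<subseteq> transl_part W \<rho>" "transl_part W \<rho> \<subseteq> monoid_generated W E"
    by (rule transl_part_monoid_generated)
  \<comment> \<open>The root values are integers, so the floor merely converts them to \<open>int\<close>.\<close>
  let ?Hs = "(\<lambda>\<beta> x. \<lfloor>\<beta> (\<rho> x 0)\<rfloor>) ` R"
  have additive: "h (x \<otimes>\<^bsub>?X\<^esub> y) = h x + h y"
    if h: "h \<in> ?Hs" and xy: "x \<in> carrier ?X" "y \<in> carrier ?X" for h x y
  proof -
    obtain \<beta> where "\<beta> \<in> roots \<H>" "h = (\<lambda>x. \<lfloor>\<beta> (\<rho> x 0)\<rfloor>)"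
      using h assms(2) by blast
    with xy show ?thesis
      by (simp add: floor_root_mult_transl_part)
  qed
  have "\<exists>F. finite F \<and> F \<subseteq> {x \<in> carrier ?X. \<forall>h\<in>?Hs. 0 \<le> h x}
      \<and> monoid_generated ?X F = {x \<in> carrier ?X. \<forall>h\<in>?Hs. 0 \<le> h x}"
    using E assms(1) additive
    by (intro X.finitely_generated_nonneg_submonoid) (simp_all add: monoid_generated_carrier_update)
  then show ?thesis
    by (simp add: monoid_generated_carrier_update)
qed

end

theorem lemma3p3p11:
  fixes W :: "('a, 'm) monoid_scheme"
    and \<rho> :: "'a \<Rightarrow> 'v::euclidean_space \<Rightarrow> 'v"
    and \<H> :: "'v set set" and C0 :: "'v set" and s :: "'v set \<Rightarrow> 'a"
    and D :: "'v set"
  assumes "affine_ext_coxeter W \<rho> \<H> C0 s"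
    and "D \<in> weyl_chambers \<H>"
  shows "\<exists>F. finite F \<and> F \<subseteq> {x \<in> transl_part W \<rho>. \<rho> x 0 \<in> closure D}
           \<and> monoid_generated W F = {x \<in> transl_part W \<rho>. \<rho> x 0 \<in> closure D}"
proof -
  interpret affine_ext_coxeter_group W \<rho> \<H> C0 s
    using assms(1) by unfold_locales
  obtain R where R: "finite R" "R \<subseteq> roots \<H>" and closure_D: "closure D = {v. \<forall>\<beta>\<in>R. 0 \<le> \<beta> v}"
    using weyl_chamber_closure[OF locally_finite assms(2)] by blast
  have "{x \<in> transl_part W \<rho>. \<rho> x 0 \<in> closure D}
      = {x \<in> transl_part W \<rho>. \<forall>\<beta>\<in>R. 0 \<le> \<beta> (\<rho> x 0)}"
    by (simp add: closure_D)
  with finitely_generated_root_halfspaces_submonoid[OF R] show ?thesis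
    by simp
qed

end
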